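(* Let $X=\{x_1,\dots,x_S\}\subset\mathbb{R}^A$ be finite and $K\ge1$. The reduced-space branch and bound algorithm for the $K$-center problem described in the context terminates after finitely many steps.
   Context: The $K$-center problem is $z=\min_{\mu^1,\dots,\mu^K\in X}\max_s\min_k\|x_s-\mu^k\|_2^2$. Root region: the box $M_0=M_0^1\times\cdots\times M_0^K$, $M_0^k=\{\mu^k:\min_s x_{s,a}\le\mu^k_a\le\max_s x_{s,a}\ \forall a\}$. Nodes are boxes $M=M^1\times\cdots\times M^K$. Lower bound $\beta(M)=\max_s\min_k\min_{\mu^k\in M^k}\|x_s-\mu^k\|_2^2$; upper bound $\alpha(M)$ is the objective value at a feasible $\hat\mu\in X\cap M$. Algorithm: maintain a list of nodes, initially $\{M_0\}$; repeatedly remove a node with least lower bound, tighten it (shrinking boxes without excluding optimal solutions, including replacing each $M^k$ by the smallest box containing $X\cap M^k$); if $|X\cap M^k|>1$ for some $k$, bisect at its midpoint the coordinate $\mu^k_a$ of largest range, keeping a child only if each of its $K$ boxes contains a sample; update the best lower bound $\beta_i$ (minimum of $\beta$ over the list) and best upper bound $\alpha_i$; delete nodes with $\beta(M')\ge\alpha_i$; stop if $\alpha_i-\beta_i\le\epsilon$ (tolerance $\epsilon\ge0$) or the list is empty. *)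

theory Defs
  imports "HOL-Analysis.Analysis" "HOL-Library.Extended_Real"
begin

text \<open>Data: a finite sample set X of points in R^A (A = CARD('a)), K clusters indexed 0..K-1.
  A node is a K-tuple of boxes; box k is given by its lower and upper corner.
  Only the components k < K of a node are meaningful.\<close>

type_synonym 'a node = "nat \<Rightarrow> ((real^'a) \<times> (real^'a))"

definition box_of :: "(real^'a) \<times> (real^'a) \<Rightarrow> (real^'a) set" where
  "box_of b = {\<mu>. \<forall>i. fst b $ i \<le> \<mu> $ i \<and> \<mu> $ i \<le> snd b $ i}"

definition bbox :: "(real^'a) set \<Rightarrow> (real^'a) \<times> (real^'a)" where
  "bbox S = ((\<chi> i. Min ((\<lambda>x. x $ i) ` S)), (\<chi> i. Max ((\<lambda>x. x $ i) ` S)))"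

definition vec_upd :: "real^'a \<Rightarrow> 'a \<Rightarrow> real \<Rightarrow> real^'a" where
  "vec_upd v a m = (\<chi> i. if i = a then m else v $ i)"

definition kc_obj :: "(real^'a) set \<Rightarrow> nat \<Rightarrow> (nat \<Rightarrow> real^'a) \<Rightarrow> real" where
  "kc_obj X K \<mu> = Max ((\<lambda>x. Min ((\<lambda>k. (norm (x - \<mu> k))\<^sup>2) ` {..<K})) ` X)"

definition kc_feasible :: "(real^'a) set \<Rightarrow> nat \<Rightarrow> (nat \<Rightarrow> real^'a) \<Rightarrow> bool" where
  "kc_feasible X K \<mu> \<longleftrightarrow> (\<forall>k<K. \<mu> k \<in> X)"

definition kc_optimal :: "(real^'a) set \<Rightarrow> nat \<Rightarrow> (nat \<Rightarrow> real^'a) \<Rightarrow> bool" where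
  "kc_optimal X K \<mu> \<longleftrightarrow> kc_feasible X K \<mu> \<and>
     (\<forall>\<nu>. kc_feasible X K \<nu> \<longrightarrow> kc_obj X K \<mu> \<le> kc_obj X K \<nu>)"

definition in_node :: "nat \<Rightarrow> ('a::finite) node \<Rightarrow> (nat \<Rightarrow> real^'a) \<Rightarrow> bool" where
  "in_node K M \<mu> \<longleftrightarrow> (\<forall>k<K. \<mu> k \<in> box_of (M k))"

definition lower_bound :: "(real^'a) set \<Rightarrow> nat \<Rightarrow> ('a::finite) node \<Rightarrow> real" where
  "lower_bound X K M = Max ((\<lambda>x. Min ((\<lambda>k. INF \<mu>\<in>box_of (M k). (norm (x - \<mu>))\<^sup>2) ` {..<K})) ` X)"

definition root_node :: "(real^'a) set \<Rightarrow> ('a::finite) node" where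
  "root_node X = (\<lambda>k. bbox X)"

definition box_range :: "('a::finite) node \<Rightarrow> nat \<Rightarrow> 'a \<Rightarrow> real" where
  "box_range M k a = snd (M k) $ a - fst (M k) $ a"

text \<open>The result is None
  if some box no longer contains a sample (the node is discarded).\<close>
definition tighten_ok :: "(real^'a) set \<Rightarrow> nat \<Rightarrow> ('a::finite) node \<Rightarrow> ('a::finite) node option \<Rightarrow> bool" where
  "tighten_ok X K M T \<longleftrightarrow> (\<exists>M''.
      (\<forall>k<K. box_of (M'' k) \<subseteq> box_of (M k)) \<and>
      (\<forall>\<mu>. kc_optimal X K \<mu> \<and> in_node K M \<mu> \<longrightarrow> in_node K M'' \<mu>) \<and>
      T = (if \<forall>k<K. X \<inter> box_of (M'' k) \<noteq> {}
           then Some (\<lambda>k. bbox (X \<inter> box_of (M'' k))) else None))"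

definition bisect_children :: "(real^'a) set \<Rightarrow> nat \<Rightarrow> ('a::finite) node \<Rightarrow> nat \<Rightarrow> 'a \<Rightarrow> ('a::finite) node set" where
  "bisect_children X K M k a =
     (let m = (fst (M k) $ a + snd (M k) $ a) / 2 in
      {N \<in> {M(k := (fst (M k), vec_upd (snd (M k)) a m)),
             M(k := (vec_upd (fst (M k)) a m, snd (M k)))}.
         \<forall>k'<K. X \<inter> box_of (N k') \<noteq> {}})"

text \<open>State: (list of nodes, best upper bound).\<close>
definition bb_step :: "(real^'a) set \<Rightarrow> nat \<Rightarrow> real \<Rightarrow>
    (('a::finite) node set \<times> ereal) \<Rightarrow> (('a::finite) node set \<times> ereal) \<Rightarrow> bool" where
  "bb_step X K \<epsilon> s s' \<longleftrightarrow> (case s of (L, \<alpha>) \<Rightarrow> case s' of (L', \<alpha>') \<Rightarrow>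
     L \<noteq> {} \<and> \<not> (\<alpha> - ereal (Min (lower_bound X K ` L)) \<le> ereal \<epsilon>) \<and>
     (\<exists>M\<in>L. (\<forall>N\<in>L. lower_bound X K M \<le> lower_bound X K N) \<and>
        ((tighten_ok X K M None \<and> \<alpha>' = \<alpha> \<and>
            L' = {N \<in> L - {M}. ereal (lower_bound X K N) < \<alpha>'})
         \<or>
         (\<exists>M' F C. tighten_ok X K M (Some M') \<and>
            finite F \<and> (\<forall>\<mu>\<in>F. kc_feasible X K \<mu> \<and> in_node K M' \<mu>) \<and>
            \<alpha>' = Min (insert \<alpha> ((\<lambda>\<mu>. ereal (kc_obj X K \<mu>)) ` F)) \<and>
            ((\<exists>k<K. card (X \<inter> box_of (M' k)) > 1) \<longrightarrow>
               (\<exists>k a. k < K \<and> (\<forall>k'<K. \<forall>a'. box_range M' k' a' \<le> box_range M' k a) \<and>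
                  C = bisect_children X K M' k a)) \<and>
            (\<not> (\<exists>k<K. card (X \<inter> box_of (M' k)) > 1) \<longrightarrow> C = {}) \<and>
            L' = {N \<in> (L - {M}) \<union> C. ereal (lower_bound X K N) < \<alpha>'}))))"

end

theory Submission
  imports Defs
begin

text \<open>Weigh a node by its number of (sample, box) incidences, the sum over k of the number
  of samples in its k-th box. Tightening never increases the weight. After tightening every box
  is the bounding box of samples, so each of its faces carries a sample; halving a coordinate of
  positive range therefore loses a sample from the halved box, and both children weigh strictly
  less than the parent. An iteration thus replaces the selected node by at most two lighter nodes
  and deletes others, so the sum of 3^weight over the list strictly decreases.\<close>

lemma sum_power_replace_less:
  fixes w :: "'n \<Rightarrow> nat" and b :: nat
  assumes "finite L" "M \<in> L" "finite C" "card C < b" "\<forall>N\<in>C. w N < w M"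
    and "L' \<subseteq> (L - {M}) \<union> C"
  shows "(\<Sum>N\<in>L'. b ^ w N) < (\<Sum>N\<in>L. b ^ w N)"
proof -
  have "b * (\<Sum>N\<in>C. b ^ w N) = (\<Sum>N\<in>C. b ^ Suc (w N))"
    by (simp add: sum_distrib_left)
  also have "\<dots> \<le> (\<Sum>N\<in>C. b ^ w M)"
    using assms(4,5) by (intro sum_mono power_increasing) auto
  also have "\<dots> = card C * b ^ w M"
    by simp
  also have "\<dots> < b * b ^ w M"
    using assms(4) by simp
  finally have C_less: "(\<Sum>N\<in>C. b ^ w N) < b ^ w M"
    by simp
  have "(\<Sum>N\<in>L'. b ^ w N) \<le> (\<Sum>N\<in>(L - {M}) \<union> C. b ^ w N)"
    using assms(1,3,6) by (intro sum_mono2) auto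
  also have "\<dots> \<le> (\<Sum>N\<in>L - {M}. b ^ w N) + (\<Sum>N\<in>C. b ^ w N)"
    using assms(1,3) by (simp add: sum_Un_nat)
  also have "\<dots> < (\<Sum>N\<in>L - {M}. b ^ w N) + b ^ w M"
    using C_less by simp
  also have "\<dots> = (\<Sum>N\<in>L. b ^ w N)"
    using assms(1,2) by (simp add: sum.remove)
  finally show ?thesis .
qed

lemma mem_box_of_bbox: "finite S \<Longrightarrow> x \<in> S \<Longrightarrow> x \<in> box_of (bbox S)"
  by (auto simp: box_of_def bbox_def intro!: Min_le Max_ge)

lemma box_of_bbox_subset:
  assumes "finite S" "S \<noteq> {}" "S \<subseteq> box_of b"
  shows "box_of (bbox S) \<subseteq> box_of b"
proof
  fix \<mu> assume "\<mu> \<in> box_of (bbox S)"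
  then have "Min ((\<lambda>x. x $ i) ` S) \<le> \<mu> $ i \<and> \<mu> $ i \<le> Max ((\<lambda>x. x $ i) ` S)" for i
    by (simp add: box_of_def bbox_def)
  moreover have "fst b $ i \<le> Min ((\<lambda>x. x $ i) ` S) \<and> Max ((\<lambda>x. x $ i) ` S) \<le> snd b $ i" for i
    using assms by (auto simp: box_of_def intro!: Min.boundedI Max.boundedI)
  ultimately have "fst b $ i \<le> \<mu> $ i \<and> \<mu> $ i \<le> snd b $ i" for i
    by (meson order_trans)
  then show "\<mu> \<in> box_of b"
    by (simp add: box_of_def)
qed

lemma bbox_faces_attained:
  assumes "finite S" "S \<noteq> {}"
  shows "\<exists>q\<in>S. q $ a = fst (bbox S) $ a" and "\<exists>q\<in>S. q $ a = snd (bbox S) $ a"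
proof -
  have "Min ((\<lambda>x. x $ a) ` S) \<in> (\<lambda>x. x $ a) ` S" "Max ((\<lambda>x. x $ a) ` S) \<in> (\<lambda>x. x $ a) ` S"
    using assms by (intro Min_in Max_in; simp)+
  then show "\<exists>q\<in>S. q $ a = fst (bbox S) $ a" and "\<exists>q\<in>S. q $ a = snd (bbox S) $ a"
    by (auto simp: bbox_def)
qed

lemma box_of_vec_upd_snd:
  assumes "m \<le> u $ a"
  shows "box_of (l, vec_upd u a m) = box_of (l, u) \<inter> {\<mu>. \<mu> $ a \<le> m}"
proof -
  have "\<mu> $ i \<le> vec_upd u a m $ i \<longleftrightarrow> \<mu> $ i \<le> u $ i" if "\<mu> $ a \<le> m" for \<mu> i
    using assms that by (auto simp: vec_upd_def)
  then show ?thesis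
    unfolding box_of_def by (auto simp: vec_upd_def split: if_splits) (metis order.refl)
qed

lemma box_of_vec_upd_fst:
  assumes "l $ a \<le> m"
  shows "box_of (vec_upd l a m, u) = box_of (l, u) \<inter> {\<mu>. m \<le> \<mu> $ a}"
proof -
  have "vec_upd l a m $ i \<le> \<mu> $ i \<longleftrightarrow> l $ i \<le> \<mu> $ i" if "m \<le> \<mu> $ a" for \<mu> i
    using assms that by (auto simp: vec_upd_def)
  then show ?thesis
    unfolding box_of_def by (auto simp: vec_upd_def split: if_splits) (metis order.refl)
qed

lemma box_range_pos_if_card_gt_1:
  assumes "1 < card (X \<inter> box_of (M k))"
  shows "\<exists>a. 0 < box_range M k a"
proof -
  have "finite (X \<inter> box_of (M k))"
    by (rule ccontr) (use assms in simp)
  moreover have "\<not> card (X \<inter> box_of (M k)) \<le> Suc 0"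
    using assms by simp
  ultimately obtain x y where xy: "x \<in> box_of (M k)" "y \<in> box_of (M k)" "x \<noteq> y"
    using card_le_Suc0_iff_eq by blast
  then obtain a where "x $ a \<noteq> y $ a"
    using vec_eq_iff by blast
  moreover have "fst (M k) $ a \<le> x $ a" "y $ a \<le> snd (M k) $ a"
    "fst (M k) $ a \<le> y $ a" "x $ a \<le> snd (M k) $ a"
    using xy(1,2) by (simp_all add: box_of_def)
  ultimately have "0 < box_range M k a"
    unfolding box_range_def by linarith
  then show ?thesis ..
qed

definition node_weight :: "(real^'a) set \<Rightarrow> nat \<Rightarrow> ('a::finite) node \<Rightarrow> nat" where
  "node_weight X K N = (\<Sum>k<K. card (X \<inter> box_of (N k)))"

definition bb_potential :: "(real^'a) set \<Rightarrow> nat \<Rightarrow> ('a::finite) node set \<Rightarrow> nat" where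
  "bb_potential X K L = (\<Sum>N\<in>L. 3 ^ node_weight X K N)"

lemma node_weight_mono:
  assumes "finite X" "\<And>k. k < K \<Longrightarrow> box_of (N k) \<subseteq> box_of (M k)"
  shows "node_weight X K N \<le> node_weight X K M"
  unfolding node_weight_def
proof (rule sum_mono)
  fix k assume "k \<in> {..<K}"
  then show "card (X \<inter> box_of (N k)) \<le> card (X \<inter> box_of (M k))"
    using assms by (intro card_mono) auto
qed

lemma node_weight_upd_less:
  assumes "finite X" "k < K" "X \<inter> box_of b \<subset> X \<inter> box_of (M k)"
  shows "node_weight X K (M(k := b)) < node_weight X K M"
  unfolding node_weight_def
proof (rule sum_strict_mono_ex1)
  show "\<forall>k'\<in>{..<K}. card (X \<inter> box_of ((M(k := b)) k')) \<le> card (X \<inter> box_of (M k'))"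
    using assms(1,3) by (auto intro: card_mono)
  show "\<exists>k'\<in>{..<K}. card (X \<inter> box_of ((M(k := b)) k')) < card (X \<inter> box_of (M k'))"
    using assms by (intro bexI[of _ k]) (auto intro: psubset_card_mono)
qed simp

lemma tighten_ok_SomeE:
  assumes "tighten_ok X K M (Some M')" "k < K"
  obtains S where "S \<noteq> {}" "S \<subseteq> X \<inter> box_of (M k)" "M' k = bbox S"
proof -
  obtain M'' where "\<forall>k<K. box_of (M'' k) \<subseteq> box_of (M k)" "\<forall>k<K. X \<inter> box_of (M'' k) \<noteq> {}"
    and "M' = (\<lambda>k. bbox (X \<inter> box_of (M'' k)))"
    using assms(1) unfolding tighten_ok_def by (auto split: if_splits)
  then show thesis
    using that[of "X \<inter> box_of (M'' k)"] assms(2) by auto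
qed

lemma node_weight_tighten_le:
  assumes "tighten_ok X K M (Some M')" "finite X"
  shows "node_weight X K M' \<le> node_weight X K M"
proof (rule node_weight_mono[OF assms(2)])
  fix k assume "k < K"
  with assms(1) obtain S where "S \<noteq> {}" "S \<subseteq> X \<inter> box_of (M k)" "M' k = bbox S"
    by (rule tighten_ok_SomeE)
  moreover have "finite S"
    using \<open>S \<subseteq> X \<inter> box_of (M k)\<close> assms(2) finite_subset by blast
  ultimately show "box_of (M' k) \<subseteq> box_of (M k)"
    using box_of_bbox_subset[of S "M k"] by simp
qed

lemma bisect_childrenE:
  assumes "N \<in> bisect_children X K M k a"
  obtains "N = M(k := (fst (M k), vec_upd (snd (M k)) a ((fst (M k) $ a + snd (M k) $ a) / 2)))"
  | "N = M(k := (vec_upd (fst (M k)) a ((fst (M k) $ a + snd (M k) $ a) / 2), snd (M k)))"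
  using assms unfolding bisect_children_def Let_def by blast

lemma finite_bisect_children: "finite (bisect_children X K M k a)"
  unfolding bisect_children_def Let_def by simp

lemma card_bisect_children_le: "card (bisect_children X K M k a) \<le> 2"
proof -
  let ?m = "(fst (M k) $ a + snd (M k) $ a) / 2"
  have "card (bisect_children X K M k a) \<le>
      card {M(k := (fst (M k), vec_upd (snd (M k)) a ?m)), M(k := (vec_upd (fst (M k)) a ?m, snd (M k)))}"
    by (rule card_mono) (auto elim: bisect_childrenE)
  also have "\<dots> \<le> 2"
    by (simp add: card_insert_if)
  finally show ?thesis .
qed

lemma bisect_children_weight_less:
  assumes "finite X" "k < K" "T \<subseteq> X" "T \<noteq> {}" "M k = bbox T" "0 < box_range M k a"
    and "N \<in> bisect_children X K M k a"
  shows "node_weight X K N < node_weight X K M"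
proof -
  define l where "l = fst (M k)"
  define u where "u = snd (M k)"
  define m where "m = (l $ a + u $ a) / 2"
  have Mk: "M k = (l, u)" by (simp add: l_def u_def)
  have "l $ a < u $ a" using assms(6) by (simp add: box_range_def l_def u_def)
  then have m: "l $ a < m" "m < u $ a" by (simp_all add: m_def)
  have "finite T" using assms(1,3) finite_subset by blast
  then have T_box: "T \<subseteq> X \<inter> box_of (l, u)"
    using assms(3,5) mem_box_of_bbox Mk by fastforce
  from assms(7) show ?thesis
  proof (cases rule: bisect_childrenE)
    case 1
    obtain q where "q \<in> T" "q $ a = u $ a"
      using bbox_faces_attained(2)[OF \<open>finite T\<close> assms(4)] assms(5) u_def by auto
    moreover have "box_of (l, vec_upd u a m) = box_of (M k) \<inter> {\<mu>. \<mu> $ a \<le> m}"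
      using box_of_vec_upd_snd[of m u a l] m Mk by simp
    ultimately have "X \<inter> box_of (l, vec_upd u a m) \<subset> X \<inter> box_of (M k)"
      using T_box m Mk by force
    then show ?thesis
      using 1 node_weight_upd_less[OF assms(1,2)] by (simp add: l_def u_def m_def)
  next
    case 2
    obtain q where "q \<in> T" "q $ a = l $ a"
      using bbox_faces_attained(1)[OF \<open>finite T\<close> assms(4)] assms(5) l_def by auto
    moreover have "box_of (vec_upd l a m, u) = box_of (M k) \<inter> {\<mu>. m \<le> \<mu> $ a}"
      using box_of_vec_upd_fst[of l a m u] m Mk by simp
    ultimately have "X \<inter> box_of (vec_upd l a m, u) \<subset> X \<inter> box_of (M k)"
      using T_box m Mk by force
    then show ?thesis
      using 2 node_weight_upd_less[OF assms(1,2)] by (simp add: l_def u_def m_def)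
  qed
qed

lemma branch_children_weight_less:
  assumes "tighten_ok X K M (Some M')" "finite X"
    and "k0 < K" "1 < card (X \<inter> box_of (M' k0))"
    and "k < K" "\<forall>k'<K. \<forall>a'. box_range M' k' a' \<le> box_range M' k a"
    and "N \<in> bisect_children X K M' k a"
  shows "node_weight X K N < node_weight X K M"
proof -
  obtain a0 where "0 < box_range M' k0 a0"
    using box_range_pos_if_card_gt_1[of X M' k0, OF assms(4)] ..
  then have "0 < box_range M' k a"
    using assms(3,6) by (meson less_le_trans)
  moreover obtain T where "T \<noteq> {}" "T \<subseteq> X \<inter> box_of (M k)" "M' k = bbox T"
    using assms(1,5) by (rule tighten_ok_SomeE)
  ultimately have "node_weight X K N < node_weight X K M'"
    using bisect_children_weight_less[OF assms(2,5) _ _ _ _ assms(7)] by blast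
  then show ?thesis
    using node_weight_tighten_le[OF assms(1,2)] by linarith
qed

lemma bb_stepE:
  assumes "bb_step X K \<epsilon> (L, \<alpha>) (L', \<alpha>')"
  obtains (prune) M where "M \<in> L" "L' \<subseteq> L - {M}"
  | (branch) M M' C where "M \<in> L" "tighten_ok X K M (Some M')"
      "\<exists>k<K. 1 < card (X \<inter> box_of (M' k)) \<Longrightarrow> \<exists>k a. k < K \<and>
         (\<forall>k'<K. \<forall>a'. box_range M' k' a' \<le> box_range M' k a) \<and> C = bisect_children X K M' k a"
      "\<not> (\<exists>k<K. 1 < card (X \<inter> box_of (M' k))) \<Longrightarrow> C = {}"
      "L' \<subseteq> (L - {M}) \<union> C"
  using assms unfolding bb_step_def prod.case
proof (elim conjE bexE disjE exE)
  fix M assume "M \<in> L" "L' = {N \<in> L - {M}. ereal (lower_bound X K N) < \<alpha>'}"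
  then show thesis
    using prune by blast
next
  fix M M' F C
  assume "M \<in> L" "tighten_ok X K M (Some M')"
    "(\<exists>k<K. card (X \<inter> box_of (M' k)) > 1) \<longrightarrow> (\<exists>k a. k < K \<and>
         (\<forall>k'<K. \<forall>a'. box_range M' k' a' \<le> box_range M' k a) \<and> C = bisect_children X K M' k a)"
    "\<not> (\<exists>k<K. card (X \<inter> box_of (M' k)) > 1) \<longrightarrow> C = {}"
    "L' = {N \<in> (L - {M}) \<union> C. ereal (lower_bound X K N) < \<alpha>'}"
  then show thesis
    using branch[of M M' C] by blast
qed

lemma bb_step_replaces_node:
  assumes "bb_step X K \<epsilon> (L, \<alpha>) (L', \<alpha>')" "finite X"
  obtains M C where "M \<in> L" "finite C" "card C \<le> 2"
    "\<forall>N\<in>C. node_weight X K N < node_weight X K M" "L' \<subseteq> (L - {M}) \<union> C"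
  using assms(1)
proof (cases rule: bb_stepE)
  case (prune M)
  then show thesis
    using that[of M "{}"] by simp
next
  case (branch M M' C)
  have "finite C \<and> card C \<le> 2 \<and> (\<forall>N\<in>C. node_weight X K N < node_weight X K M)"
  proof (cases "\<exists>k<K. 1 < card (X \<inter> box_of (M' k))")
    case True
    then obtain k0 where k0: "k0 < K" "1 < card (X \<inter> box_of (M' k0))"
      by blast
    obtain k a where k: "k < K" "\<forall>k'<K. \<forall>a'. box_range M' k' a' \<le> box_range M' k a"
      and C: "C = bisect_children X K M' k a"
      using branch(3) True by blast
    show ?thesis
      using branch_children_weight_less[OF branch(2) assms(2) k0 k] C
      by (simp add: finite_bisect_children card_bisect_children_le)
  qed (use branch(4) in simp)
  then show thesis
    using that[of M C] branch(1,5) by blast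
qed

lemma bb_step_potential_less:
  assumes "bb_step X K \<epsilon> (L, \<alpha>) (L', \<alpha>')" "finite L" "finite X"
  shows "finite L'" and "bb_potential X K L' < bb_potential X K L"
proof -
  obtain M C where "M \<in> L" "finite C" "card C \<le> 2"
    "\<forall>N\<in>C. node_weight X K N < node_weight X K M" and L': "L' \<subseteq> (L - {M}) \<union> C"
    using bb_step_replaces_node[OF assms(1,3)] .
  then show "finite L'"
    using assms(2) finite_subset by blast
  show "bb_potential X K L' < bb_potential X K L"
    unfolding bb_potential_def
    using sum_power_replace_less[OF assms(2) \<open>M \<in> L\<close> \<open>finite C\<close> _ _ L'] \<open>card C \<le> 2\<close>
      \<open>\<forall>N\<in>C. node_weight X K N < node_weight X K M\<close> by simp
qed

theorem lemma4:
  fixes X :: "(real^'a) set" and K :: nat and \<epsilon> :: real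
  assumes "finite X" and "X \<noteq> {}" and "K \<ge> 1" and "\<epsilon> \<ge> 0"
  shows "\<not> (\<exists>f. f 0 = ({root_node X}, \<infinity>) \<and> (\<forall>i. bb_step X K \<epsilon> (f i) (f (Suc i))))"
proof
  assume "\<exists>f. f 0 = ({root_node X}, \<infinity>) \<and> (\<forall>i. bb_step X K \<epsilon> (f i) (f (Suc i)))"
  then obtain f where f0: "f 0 = ({root_node X}, \<infinity>)"
    and "\<And>i. bb_step X K \<epsilon> (f i) (f (Suc i))" by blast
  then have step: "bb_step X K \<epsilon> (fst (f i), snd (f i)) (fst (f (Suc i)), snd (f (Suc i)))" for i
    by simp
  have finite_nodes: "finite (fst (f i))" for i
  proof (induction i)
    case 0
    then show ?case using f0 by simp
  next
    case (Suc i)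
    then show ?case using bb_step_potential_less(1)[OF step _ assms(1)] by blast
  qed
  define g where "g i = bb_potential X K (fst (f i))" for i
  have "(g (Suc i), g i) \<in> {(x, y). x < y}" for i
    using bb_step_potential_less(2)[OF step finite_nodes assms(1)] by (simp add: g_def)
  then show False
    using wf_less unfolding wf_iff_no_infinite_down_chain by blast
qed

end
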